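(* Let $A$ be a bounded linear operator on a complex Hilbert space $\mathcal{H}$. For $t \in [0,2\pi)$ put $A_t = e^{it}A$, $H_t = \frac{1}{2}(A_t + A_t^* )$, $J_t = \frac{1}{2i}(A_t - A_t^* )$, and \[ b_x(t) = \sup_{\|x\|=1}\langle H_t x, x\rangle - \inf_{\|x\|=1}\langle H_t x, x\rangle,\qquad b_y(t) = \sup_{\|x\|=1}\langle J_t x, x\rangle - \inf_{\|x\|=1}\langle J_t x, x\rangle . \] Then \[ \|A^*A - AA^*\| \le \min_{t \in [0,2\pi)} \{ b_x(t)\, b_y(t) \}. \]
   Context: $b_x(t)$ and $b_y(t)$ are the widths of the numerical range $W(e^{it}A)=\{\langle e^{it}Ax,x\rangle : \|x\|=1\}$ in the directions of the real and imaginary axes respectively. *)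

theory Defs
  imports "HOL-Analysis.Analysis"
begin

text \<open>The inner product is linear in the first argument and
conjugate-linear in the second; the norm is the one induced by the inner product.\<close>

class complex_inner = real_normed_vector +
  fixes scaleC :: "complex \<Rightarrow> 'a \<Rightarrow> 'a" (infixr \<open>*\<^sub>C\<close> 75)
    and cinner :: "'a \<Rightarrow> 'a \<Rightarrow> complex"
  assumes scaleC_add_right: "a *\<^sub>C (x + y) = a *\<^sub>C x + a *\<^sub>C y"
    and scaleC_add_left: "(a + b) *\<^sub>C x = a *\<^sub>C x + b *\<^sub>C x"
    and scaleC_scaleC: "a *\<^sub>C (b *\<^sub>C x) = (a * b) *\<^sub>C x"
    and scaleC_one: "1 *\<^sub>C x = x"
    and scaleR_scaleC: "scaleR r x = complex_of_real r *\<^sub>C x"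
    and cinner_conj_commute: "cinner x y = cnj (cinner y x)"
    and cinner_add_left: "cinner (x + y) z = cinner x z + cinner y z"
    and cinner_scaleC_left: "cinner (a *\<^sub>C x) y = a * cinner x y"
    and cinner_self_nonneg: "0 \<le> Re (cinner x x)"
    and cinner_self_eq_zero: "cinner x x = 0 \<longleftrightarrow> x = 0"
    and norm_eq_sqrt_cinner: "norm x = sqrt (Re (cinner x x))"

class chilbert_space = complex_inner + complete_space

definition bounded_clinear_op :: "('a::complex_inner \<Rightarrow> 'a) \<Rightarrow> bool" where
  "bounded_clinear_op A \<longleftrightarrow>
     (\<forall>x y. A (x + y) = A x + A y) \<and> (\<forall>c x. A (c *\<^sub>C x) = c *\<^sub>C A x) \<and>
     (\<exists>K. \<forall>x. norm (A x) \<le> norm x * K)"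

definition cadjoint :: "('a::complex_inner \<Rightarrow> 'a) \<Rightarrow> ('a \<Rightarrow> 'a)" where
  "cadjoint A = (THE B. \<forall>x y. cinner (A x) y = cinner x (B y))"

definition rot_op :: "('a::complex_inner \<Rightarrow> 'a) \<Rightarrow> real \<Rightarrow> 'a \<Rightarrow> 'a" where
  "rot_op A t = (\<lambda>x. exp (\<i> * complex_of_real t) *\<^sub>C A x)"

definition H_op :: "('a::complex_inner \<Rightarrow> 'a) \<Rightarrow> real \<Rightarrow> 'a \<Rightarrow> 'a" where
  "H_op A t = (\<lambda>x. (1 / 2) *\<^sub>C (rot_op A t x + cadjoint (rot_op A t) x))"

definition J_op :: "('a::complex_inner \<Rightarrow> 'a) \<Rightarrow> real \<Rightarrow> 'a \<Rightarrow> 'a" where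
  "J_op A t = (\<lambda>x. (1 / (2 * \<i>)) *\<^sub>C (rot_op A t x - cadjoint (rot_op A t) x))"

text \<open>For selfadjoint \<open>T\<close>, \<open>\<langle>T x, x\<rangle>\<close> is real; we take its real part.\<close>
definition b_x :: "('a::complex_inner \<Rightarrow> 'a) \<Rightarrow> real \<Rightarrow> real" where
  "b_x A t = (SUP x\<in>{x. norm x = 1}. Re (cinner (H_op A t x) x))
           - (INF x\<in>{x. norm x = 1}. Re (cinner (H_op A t x) x))"

definition b_y :: "('a::complex_inner \<Rightarrow> 'a) \<Rightarrow> real \<Rightarrow> real" where
  "b_y A t = (SUP x\<in>{x. norm x = 1}. Re (cinner (J_op A t x) x))
           - (INF x\<in>{x. norm x = 1}. Re (cinner (J_op A t x) x))"

end

theory Submission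
  imports Defs
begin

text \<open>Put \<open>B = e\<^sup>i\<^sup>t A\<close>, so that \<open>B\<^sup>*B - BB\<^sup>* = A\<^sup>*A - AA\<^sup>*\<close>. For the Cartesian decomposition
  \<open>B = H + iJ\<close> one has \<open>\<langle>(B\<^sup>*B - BB\<^sup>*)x, x\<rangle> = \<parallel>Bx\<parallel>\<^sup>2 - \<parallel>B\<^sup>*x\<parallel>\<^sup>2 = 4 Re \<langle>Hx, iJx\<rangle>\<close>, and this survives
  shifting \<open>H\<close> and \<open>J\<close> by real multiples of the identity. Shifted by the midpoints of their
  numerical ranges, \<open>H\<close> and \<open>J\<close> become selfadjoint operators of numerical radius, hence norm,
  at most \<open>b\<^sub>x/2\<close> and \<open>b\<^sub>y/2\<close>; by Cauchy-Schwarz the selfadjoint operator \<open>B\<^sup>*B - BB\<^sup>*\<close> then has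
  numerical radius, hence norm, at most \<open>b\<^sub>x b\<^sub>y\<close>. Since the adjoint is defined by a
  description, its existence is first derived from the Riesz representation theorem.\<close>

lemma scaleC_zero_left [simp]: "0 *\<^sub>C (x::'a::complex_inner) = 0"
  by (metis add_0 add_cancel_right_right scaleC_add_left)

lemma cinner_add_right: "cinner (x::'a::complex_inner) (y + z) = cinner x y + cinner x z"
  by (metis cinner_conj_commute cinner_add_left complex_cnj_add)

lemma cinner_scaleC_right: "cinner (x::'a::complex_inner) (a *\<^sub>C y) = cnj a * cinner x y"
  by (metis cinner_conj_commute cinner_scaleC_left complex_cnj_mult)

lemma cinner_zero_right [simp]: "cinner (x::'a::complex_inner) 0 = 0"
  by (metis add_0 add_cancel_right_right cinner_add_right)

lemma cinner_diff_left: "cinner (x - y) (z::'a::complex_inner) = cinner x z - cinner y z"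
  by (metis add_diff_cancel cinner_add_left diff_add_cancel eq_diff_eq)

lemma cinner_diff_right: "cinner (x::'a::complex_inner) (y - z) = cinner x y - cinner x z"
  by (metis add_diff_cancel cinner_add_right diff_add_cancel eq_diff_eq)

lemma Im_cinner_self [simp]: "Im (cinner (x::'a::complex_inner) x) = 0"
  using cinner_conj_commute[of x x] by (metis cnj.simps(2) neg_equal_zero)

lemma Re_cinner_commute: "Re (cinner (x::'a::complex_inner) y) = Re (cinner y x)"
  by (subst cinner_conj_commute) simp

lemma power2_norm_eq_cinner: "(norm (x::'a::complex_inner))\<^sup>2 = Re (cinner x x)"
  using cinner_self_nonneg[of x] by (simp add: norm_eq_sqrt_cinner)

lemma cinner_self_eq_power2_norm: "cinner (x::'a::complex_inner) x = complex_of_real ((norm x)\<^sup>2)"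
  by (simp add: power2_norm_eq_cinner complex_eq_iff)

lemma cinner_left_ext:
  fixes u w :: "'a::complex_inner"
  assumes "\<And>y. cinner u y = cinner w y"
  shows "u = w"
proof -
  have "cinner (u - w) (u - w) = 0" using assms[of "u - w"] by (simp add: cinner_diff_left)
  thus ?thesis by (metis cinner_self_eq_zero eq_iff_diff_eq_0)
qed

lemma norm_scaleC: "norm (a *\<^sub>C (x::'a::complex_inner)) = cmod a * norm x"
proof -
  have "(norm (a *\<^sub>C x))\<^sup>2 = (cmod a * norm x)\<^sup>2"
    unfolding power2_norm_eq_cinner cinner_scaleC_left cinner_scaleC_right power_mult_distrib
    using cinner_self_eq_power2_norm[of x]
    by (simp add: power2_norm_eq_cinner mult.assoc[symmetric] flip: complex_norm_square)
       (metis cmod_power2 power2_eq_square)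
  thus ?thesis by (simp add: power2_eq_iff_nonneg)
qed

lemma cinner_Cauchy_Schwarz: "cmod (cinner x y) \<le> norm (x::'a::complex_inner) * norm y"
proof (cases "y = 0")
  case True thus ?thesis by simp
next
  case False
  define c where "c = cinner x y / complex_of_real ((norm y)\<^sup>2)"
  have ny: "norm y > 0" using False by simp
  have "0 \<le> Re (cinner (x - c *\<^sub>C y) (x - c *\<^sub>C y))" by (rule cinner_self_nonneg)
  also have "cinner (x - c *\<^sub>C y) (x - c *\<^sub>C y) =
     cinner x x - cnj c * cinner x y - c * cinner y x + c * cnj c * cinner y y"
    by (simp add: cinner_diff_left cinner_diff_right cinner_scaleC_left cinner_scaleC_right algebra_simps)
  also have "\<dots> = complex_of_real ((norm x)\<^sup>2 - (cmod (cinner x y))\<^sup>2 / (norm y)\<^sup>2)"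
    using ny unfolding c_def cinner_self_eq_power2_norm
    by (subst cinner_conj_commute[of y x])
       (simp add: complex_eq_iff power2_eq_square field_simps flip: complex_norm_square)
  finally have "(cmod (cinner x y))\<^sup>2 \<le> (norm x * norm y)\<^sup>2"
    using ny by (simp add: field_simps power_mult_distrib)
  thus ?thesis by (rule power2_le_imp_le) simp
qed

lemma power2_norm_add:
  "(norm (x + y))\<^sup>2 = (norm (x::'a::complex_inner))\<^sup>2 + 2 * Re (cinner x y) + (norm y)\<^sup>2"
  unfolding power2_norm_eq_cinner
  by (simp add: cinner_add_left cinner_add_right Re_cinner_commute[of y x])

lemma power2_norm_diff:
  "(norm (x - y))\<^sup>2 = (norm (x::'a::complex_inner))\<^sup>2 - 2 * Re (cinner x y) + (norm y)\<^sup>2"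
  unfolding power2_norm_eq_cinner
  by (simp add: cinner_diff_left cinner_diff_right Re_cinner_commute[of y x])

lemma obtain_unit_vector:
  fixes x :: "'a::complex_inner"
  assumes "x \<noteq> 0"
  obtains u where "norm u = 1" "x = complex_of_real (norm x) *\<^sub>C u"
proof
  let ?u = "complex_of_real (1 / norm x) *\<^sub>C x"
  show "norm ?u = 1" using assms by (simp add: norm_scaleC norm_divide)
  show "x = complex_of_real (norm x) *\<^sub>C ?u"
    using assms by (simp add: scaleC_scaleC scaleC_one flip: of_real_mult)
qed

lemma linear_le_quadratic_imp_zero:
  fixes E D :: real
  assumes "\<And>s. 2 * s * E \<le> s\<^sup>2 * D"
  shows "E = 0"
proof (rule ccontr)
  assume "E \<noteq> 0"
  define m where "m = \<bar>D\<bar> + 1"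
  have m: "m > 0" unfolding m_def by simp
  have "2 * (E / m) * E * m\<^sup>2 \<le> (E / m)\<^sup>2 * D * m\<^sup>2"
    using assms[of "E / m"] by (rule mult_right_mono) simp
  hence "E\<^sup>2 * (2 * m) \<le> E\<^sup>2 * D"
    using m by (simp add: power2_eq_square field_simps)
  moreover have "E\<^sup>2 > 0" using \<open>E \<noteq> 0\<close> by simp
  ultimately have "2 * m \<le> D" by simp
  thus False unfolding m_def by (simp add: abs_if split: if_split_asm)
qed

text \<open>A bounded functional attaining its norm \<open>c\<close> at a unit vector \<open>x\<close> is \<open>\<langle>-, c x\<rangle>\<close>:
  comparing \<open>|f(x + s y)|\<^sup>2 \<le> c\<^sup>2 \<parallel>x + s y\<parallel>\<^sup>2\<close> for all small real \<open>s\<close> forces equality of the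
  first-order terms.\<close>

lemma functional_eq_cinner_norming_vector:
  fixes f :: "'a::complex_inner \<Rightarrow> complex"
  assumes add: "\<And>x y. f (x + y) = f x + f y"
    and hom: "\<And>a x. f (a *\<^sub>C x) = a * f x"
    and bnd: "\<And>w. cmod (f w) \<le> c * norm w" and c: "c > 0"
    and x: "norm x = 1" and fx: "f x = complex_of_real c"
  shows "f y = cinner y (complex_of_real c *\<^sub>C x)"
proof -
  have Re_eq: "Re (f y) = c * Re (cinner y x)" for y
  proof -
    have "2 * s * (c * (Re (f y) - c * Re (cinner y x)))
          \<le> s\<^sup>2 * (c\<^sup>2 * (norm y)\<^sup>2 - (cmod (f y))\<^sup>2)" for s :: real
    proof -
      define w where "w = x + complex_of_real s *\<^sub>C y"
      have "(cmod (f w))\<^sup>2 \<le> (c * norm w)\<^sup>2"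
        using bnd[of w] by (simp add: power_mono)
      moreover have "(cmod (f w))\<^sup>2 = c\<^sup>2 + 2 * s * c * Re (f y) + s\<^sup>2 * (cmod (f y))\<^sup>2"
        unfolding w_def add hom fx cmod_power2 by (simp add: power2_eq_square algebra_simps)
      moreover have "(norm w)\<^sup>2 = 1 + 2 * s * Re (cinner y x) + s\<^sup>2 * (norm y)\<^sup>2"
        unfolding w_def power2_norm_add
        by (simp add: x norm_scaleC cinner_scaleC_right power_mult_distrib Re_cinner_commute[of x y])
      ultimately show ?thesis by (simp add: power_mult_distrib power2_eq_square algebra_simps)
    qed
    hence "c * (Re (f y) - c * Re (cinner y x)) = 0" by (rule linear_le_quadratic_imp_zero)
    thus ?thesis using c by simp
  qed
  have "Im (f y) = c * Im (cinner y x)"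
    using Re_eq[of "\<i> *\<^sub>C y"] by (simp add: hom cinner_scaleC_left)
  thus ?thesis using Re_eq by (simp add: cinner_scaleC_right complex_eq_iff)
qed

lemma functional_value_rotate_real:
  fixes f :: "'a::complex_inner \<Rightarrow> complex"
  assumes hom: "\<And>a x. f (a *\<^sub>C x) = a * f x" and "f x \<noteq> 0"
  obtains v where "norm v = norm x" "f v = complex_of_real (cmod (f x))"
proof
  let ?v = "(cnj (f x) / complex_of_real (cmod (f x))) *\<^sub>C x"
  show "norm ?v = norm x" using assms(2) by (simp add: norm_scaleC norm_divide)
  have "f x * cnj (f x) = complex_of_real (cmod (f x)) * complex_of_real (cmod (f x))"
    by (metis complex_norm_square power2_eq_square of_real_mult)
  thus "f ?v = complex_of_real (cmod (f x))"
    unfolding hom using assms(2) by (simp add: field_simps)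
qed

lemma unit_vectors_close_if_sum_long:
  fixes x y :: "'a::complex_inner"
  assumes "norm x = 1" "norm y = 1" "2 - d \<le> norm (x + y)" "0 \<le> d" "d \<le> 2"
  shows "(norm (x - y))\<^sup>2 \<le> 4 * d"
proof -
  have "(2 - d)\<^sup>2 \<le> (norm (x + y))\<^sup>2" using assms by (simp add: power_mono)
  moreover have "(norm (x - y))\<^sup>2 = 4 - (norm (x + y))\<^sup>2"
    using power2_norm_add[of x y] power2_norm_diff[of x y] assms by simp
  moreover have "(2 - d)\<^sup>2 = 4 - 4 * d + d\<^sup>2" by (simp add: power2_eq_square algebra_simps)
  ultimately show ?thesis by (smt (verit) zero_le_power2)
qed

text \<open>A maximising sequence for a bounded functional is Cauchy: two of its late terms
  have a long sum, so by the parallelogram law a short difference.\<close>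

lemma norming_sequence_Cauchy:
  fixes f :: "'a::complex_inner \<Rightarrow> complex"
  assumes add: "\<And>x y. f (x + y) = f x + f y"
    and bnd: "\<And>w. cmod (f w) \<le> c * norm w" and c: "c > 0"
    and X: "\<And>n. norm (X n) = 1" and fX: "\<And>n. f (X n) = complex_of_real (r n)"
    and r: "\<And>n. c - c * inverse (real (Suc n)) < r n"
  shows "Cauchy X"
proof (rule metric_CauchyI)
  fix e :: real assume e: "e > 0"
  obtain N :: nat where N: "8 / e\<^sup>2 < real N" using reals_Archimedean2 by blast
  define d where "d = 2 * inverse (real (Suc N))"
  have rN: "c - c * inverse (real (Suc N)) < r n" if "n \<ge> N" for n
  proof -
    have "c * inverse (real (Suc n)) \<le> c * inverse (real (Suc N))"
      using that c by (simp add: field_simps)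
    thus ?thesis using r[of n] by linarith
  qed
  have "dist (X m) (X n) < e" if m: "m \<ge> N" and n: "n \<ge> N" for m n
  proof -
    have r_nonneg: "r k \<ge> 0" for k
    proof -
      have "c * inverse (real (Suc k)) \<le> c" using c by (simp add: field_simps)
      thus ?thesis using r[of k] by linarith
    qed
    have "c * (2 - d) \<le> r m + r n" using rN[OF m] rN[OF n] unfolding d_def by (simp add: algebra_simps)
    also have "r m + r n = cmod (f (X m + X n))"
      using r_nonneg[of m] r_nonneg[of n] by (simp add: add fX flip: of_real_add)
    also have "\<dots> \<le> c * norm (X m + X n)" by (rule bnd)
    finally have "2 - d \<le> norm (X m + X n)" using c by simp
    hence "(norm (X m - X n))\<^sup>2 \<le> 4 * d"
      by (rule unit_vectors_close_if_sum_long[OF X X]) (auto simp: d_def field_simps)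
    also have "4 * d < e\<^sup>2"
      using N e unfolding d_def by (simp add: field_simps) (smt (verit) zero_le_power2)
    finally have "(norm (X m - X n))\<^sup>2 < e\<^sup>2" .
    hence "norm (X m - X n) < e" by (rule power_less_imp_less_base) (use e in simp)
    thus ?thesis by (simp add: dist_norm)
  qed
  thus "\<exists>N. \<forall>m\<ge>N. \<forall>n\<ge>N. dist (X m) (X n) < e" by blast
qed

lemma bounded_functional_norming_sequence:
  fixes f :: "'a::complex_inner \<Rightarrow> complex"
  assumes hom: "\<And>a x. f (a *\<^sub>C x) = a * f x"
    and bnd: "\<And>w. cmod (f w) \<le> K * norm w" and "f x0 \<noteq> 0"
  obtains c X r where "c > 0" "\<And>w. cmod (f w) \<le> c * norm w"
    "\<And>n. norm (X n) = 1" "\<And>n. f (X n) = complex_of_real (r n)"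
    "\<And>n. c - c * inverse (real (Suc n)) < r n"
proof -
  define S where "S = (\<lambda>u. cmod (f u)) ` {u. norm u = 1}"
  define c where "c = Sup S"
  have f0: "f 0 = 0" using hom[of 0 0] by simp
  have bddS: "bdd_above S" unfolding S_def
    by (rule bdd_aboveI[of _ K]) (auto, metis bnd mult.right_neutral)
  have le_c: "cmod (f u) \<le> c" if "norm u = 1" for u
    unfolding c_def S_def using that bddS unfolding S_def by (intro cSup_upper) auto
  have bnd_c: "cmod (f w) \<le> c * norm w" for w
  proof (cases "w = 0")
    case True thus ?thesis using f0 by simp
  next
    case False
    then obtain u where u: "norm u = 1" and w: "w = complex_of_real (norm w) *\<^sub>C u"
      by (rule obtain_unit_vector)
    have "cmod (f w) = norm w * cmod (f u)" by (subst w) (simp add: hom norm_mult)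
    also have "\<dots> \<le> norm w * c" using le_c[OF u] by (simp add: mult_left_mono)
    finally show ?thesis by (simp add: mult.commute)
  qed
  have "x0 \<noteq> 0" using \<open>f x0 \<noteq> 0\<close> f0 by auto
  then obtain u0 where u0: "norm u0 = 1" and x0: "x0 = complex_of_real (norm x0) *\<^sub>C u0"
    by (rule obtain_unit_vector)
  have "f u0 \<noteq> 0" using \<open>f x0 \<noteq> 0\<close> by (subst (asm) x0) (simp add: hom)
  hence c: "c > 0" using le_c[OF u0] by (meson less_le_trans zero_less_norm_iff)
  have "\<exists>x r. norm x = 1 \<and> f x = complex_of_real r \<and> c - c * inverse (real (Suc n)) < r" for n
  proof -
    have "c - c * inverse (real (Suc n)) < Sup S" using c unfolding c_def by simp
    then obtain x where x: "norm x = 1" and lt: "c - c * inverse (real (Suc n)) < cmod (f x)"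
      using less_cSup_iff[OF _ bddS] u0 unfolding S_def by blast
    have "c * inverse (real (Suc n)) \<le> c" using c by (simp add: field_simps)
    hence "f x \<noteq> 0" using lt by auto
    then obtain v where "norm v = norm x" "f v = complex_of_real (cmod (f x))"
      using functional_value_rotate_real hom by metis
    thus ?thesis using x lt by auto
  qed
  thus ?thesis using that c bnd_c by metis
qed

lemma bounded_functional_norm_attained:
  fixes f :: "'a::chilbert_space \<Rightarrow> complex"
  assumes add: "\<And>x y. f (x + y) = f x + f y"
    and hom: "\<And>a x. f (a *\<^sub>C x) = a * f x"
    and bnd: "\<And>w. cmod (f w) \<le> K * norm w" and "f x0 \<noteq> 0"
  obtains c L where "c > 0" "norm L = 1" "f L = complex_of_real c"
    "\<And>w. cmod (f w) \<le> c * norm w"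
proof -
  obtain c X r where c: "c > 0" and bnd_c: "\<And>w. cmod (f w) \<le> c * norm w"
    and X: "\<And>n. norm (X n) = 1" and fX: "\<And>n. f (X n) = complex_of_real (r n)"
    and r: "\<And>n. c - c * inverse (real (Suc n)) < r n"
    using bounded_functional_norming_sequence[OF hom bnd \<open>f x0 \<noteq> 0\<close>] by metis
  have "Cauchy X" by (rule norming_sequence_Cauchy[OF add bnd_c c X fX r])
  then obtain L where XL: "X \<longlonglongrightarrow> L" using Cauchy_convergent_iff convergent_def by blast
  have "norm L = 1"
    using tendsto_norm[OF XL] X by (simp add: LIMSEQ_const_iff)
  interpret additive f by (rule additive.intro) (rule add)
  have "(\<lambda>n. f (X n) - f L) \<longlonglongrightarrow> 0"
  proof (rule Lim_null_comparison)
    show "\<forall>\<^sub>F n in sequentially. norm (f (X n) - f L) \<le> c * norm (X n - L)"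
      using bnd_c by (simp flip: diff)
    show "(\<lambda>n. c * norm (X n - L)) \<longlonglongrightarrow> 0"
      using XL by (intro tendsto_mult_right_zero tendsto_norm_zero LIM_zero)
  qed
  hence f_lim: "(\<lambda>n. f (X n)) \<longlonglongrightarrow> f L" by (rule LIM_zero_cancel)
  have "r \<longlonglongrightarrow> c"
  proof (rule tendsto_sandwich[of "\<lambda>n. c - c * inverse (real (Suc n))" _ _ "\<lambda>n. c"])
    show "\<forall>\<^sub>F n in sequentially. c - c * inverse (real (Suc n)) \<le> r n"
      using r by (simp add: less_imp_le)
    show "\<forall>\<^sub>F n in sequentially. r n \<le> c"
      using bnd_c[of "X _"] X fX by (simp add: abs_le_iff)
    show "(\<lambda>n. c - c * inverse (real (Suc n))) \<longlonglongrightarrow> c"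
      using tendsto_diff[OF tendsto_const tendsto_mult_right_zero[OF LIMSEQ_inverse_real_of_nat]]
      by simp
  qed simp
  hence "(\<lambda>n. f (X n)) \<longlonglongrightarrow> complex_of_real c" using fX by (simp add: tendsto_of_real)
  hence "f L = complex_of_real c" using f_lim LIMSEQ_unique by blast
  thus ?thesis using that c \<open>norm L = 1\<close> bnd_c by blast
qed

lemma Riesz_representation:
  fixes f :: "'a::chilbert_space \<Rightarrow> complex"
  assumes add: "\<And>x y. f (x + y) = f x + f y"
    and hom: "\<And>a x. f (a *\<^sub>C x) = a * f x"
    and bnd: "\<And>w. cmod (f w) \<le> K * norm w"
  shows "\<exists>z. \<forall>y. f y = cinner y z"
proof (cases "\<forall>x. f x = 0")
  case True thus ?thesis by (intro exI[of _ 0]) simp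
next
  case False
  then obtain c L where "c > 0" "norm L = 1" "f L = complex_of_real c"
    "\<And>w. cmod (f w) \<le> c * norm w"
    using bounded_functional_norm_attained[OF add hom bnd] by metis
  thus ?thesis using functional_eq_cinner_norming_vector[OF add hom] by metis
qed

text \<open>Both members of an adjoint pair are automatically linear; \<open>cadjoint_pair S S\<close> says
  that \<open>S\<close> is selfadjoint.\<close>

definition cadjoint_pair :: "('a::complex_inner \<Rightarrow> 'a) \<Rightarrow> ('a \<Rightarrow> 'a) \<Rightarrow> bool" where
  "cadjoint_pair B B' \<longleftrightarrow> (\<forall>x y. cinner (B x) y = cinner x (B' y))"

lemma cadjoint_pairD: "cadjoint_pair B B' \<Longrightarrow> cinner (B x) y = cinner x (B' y)"
  unfolding cadjoint_pair_def by blast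

lemma cadjoint_pair_sym: "cadjoint_pair B B' \<Longrightarrow> cadjoint_pair B' B"
  unfolding cadjoint_pair_def by (metis cinner_conj_commute)

lemma cadjoint_pair_add:
  assumes "cadjoint_pair B B'"
  shows "B (x + y) = B x + B y"
  by (rule cinner_left_ext) (simp add: cadjoint_pairD[OF assms] cinner_add_left)

lemma cadjoint_pair_scaleC:
  assumes "cadjoint_pair B B'"
  shows "B (c *\<^sub>C x) = c *\<^sub>C B x"
  by (rule cinner_left_ext) (simp add: cadjoint_pairD[OF assms] cinner_scaleC_left)

lemma cadjoint_pair_diff:
  assumes "cadjoint_pair B B'"
  shows "B (x - y) = B x - B y"
  by (rule cinner_left_ext) (simp add: cadjoint_pairD[OF assms] cinner_diff_left)

lemma cadjoint_pair_zero:
  assumes "cadjoint_pair B B'"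
  shows "B 0 = 0"
  using cadjoint_pair_diff[OF assms, of 0 0] by simp

lemma cadjoint_eqI:
  assumes "cadjoint_pair B B'"
  shows "cadjoint B = B'"
  unfolding cadjoint_def
proof (rule the_equality)
  show "\<forall>x y. cinner (B x) y = cinner x (B' y)" using assms unfolding cadjoint_pair_def .
  fix B'' assume B'': "\<forall>x y. cinner (B x) y = cinner x (B'' y)"
  show "B'' = B'"
  proof
    fix y
    have "cinner x (B'' y) = cinner x (B' y)" for x
      using B'' cadjoint_pairD[OF assms] by metis
    thus "B'' y = B' y" by (intro cinner_left_ext) (metis cinner_conj_commute)
  qed
qed

lemma cadjoint_pair_cadjoint:
  fixes A :: "'a::chilbert_space \<Rightarrow> 'a"
  assumes "bounded_clinear_op A"
  shows "cadjoint_pair A (cadjoint A)"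
proof -
  obtain K where add: "\<And>x y. A (x + y) = A x + A y" and hom: "\<And>c x. A (c *\<^sub>C x) = c *\<^sub>C A x"
    and bnd: "\<And>x. norm (A x) \<le> norm x * K"
    using assms unfolding bounded_clinear_op_def by blast
  have "\<exists>z. \<forall>x. cinner (A x) y = cinner x z" for y
  proof (rule Riesz_representation[where K = "K * norm y"])
    show "cmod (cinner (A w) y) \<le> K * norm y * norm w" for w
      using cinner_Cauchy_Schwarz[of "A w" y] mult_right_mono[OF bnd[of w], of "norm y"]
      by (simp add: algebra_simps)
  qed (simp_all add: add hom cinner_add_left cinner_scaleC_left)
  then obtain B where "cadjoint_pair A B"
    unfolding cadjoint_pair_def by metis
  thus ?thesis using cadjoint_eqI by metis
qed

lemma cadjoint_pair_rot_op:
  assumes "cadjoint_pair A A'"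
  shows "cadjoint_pair (rot_op A t) (\<lambda>y. cnj (exp (\<i> * complex_of_real t)) *\<^sub>C A' y)"
  unfolding cadjoint_pair_def rot_op_def
  by (simp add: cinner_scaleC_left cinner_scaleC_right cadjoint_pairD[OF assms])

lemma cadjoint_pair_commutator:
  assumes "cadjoint_pair B B'"
  shows "cadjoint_pair (\<lambda>x. B' (B x) - B (B' x)) (\<lambda>x. B' (B x) - B (B' x))"
  using cadjoint_pairD[OF assms] cadjoint_pairD[OF cadjoint_pair_sym[OF assms]]
  unfolding cadjoint_pair_def by (simp add: cinner_diff_left cinner_diff_right)

lemma hermitian_diff_scaleC:
  assumes "cadjoint_pair S S"
  shows "cadjoint_pair (\<lambda>x. S x - complex_of_real a *\<^sub>C x) (\<lambda>x. S x - complex_of_real a *\<^sub>C x)"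
  using cadjoint_pairD[OF assms] unfolding cadjoint_pair_def
  by (simp add: cinner_diff_left cinner_diff_right cinner_scaleC_left cinner_scaleC_right)

definition real_part_op :: "('a::complex_inner \<Rightarrow> 'a) \<Rightarrow> ('a \<Rightarrow> 'a) \<Rightarrow> 'a \<Rightarrow> 'a" where
  "real_part_op B B' x = (1 / 2) *\<^sub>C (B x + B' x)"

definition imag_part_op :: "('a::complex_inner \<Rightarrow> 'a) \<Rightarrow> ('a \<Rightarrow> 'a) \<Rightarrow> 'a \<Rightarrow> 'a" where
  "imag_part_op B B' x = (1 / (2 * \<i>)) *\<^sub>C (B x - B' x)"

lemma hermitian_real_part_op:
  assumes "cadjoint_pair B B'"
  shows "cadjoint_pair (real_part_op B B') (real_part_op B B')"
  using cadjoint_pairD[OF assms] cadjoint_pairD[OF cadjoint_pair_sym[OF assms]]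
  unfolding cadjoint_pair_def real_part_op_def
  by (simp add: cinner_add_left cinner_add_right cinner_scaleC_left cinner_scaleC_right add.commute)

lemma hermitian_imag_part_op:
  assumes "cadjoint_pair B B'"
  shows "cadjoint_pair (imag_part_op B B') (imag_part_op B B')"
  using cadjoint_pairD[OF assms] cadjoint_pairD[OF cadjoint_pair_sym[OF assms]]
  unfolding cadjoint_pair_def imag_part_op_def
  by (simp add: cinner_diff_left cinner_diff_right cinner_scaleC_left cinner_scaleC_right field_simps)

lemma cinner_adjoint_self:
  assumes "cadjoint_pair B B'"
  shows "cinner (B' x) x = cnj (cinner (B x) x)"
  by (metis assms cadjoint_pairD cadjoint_pair_sym cinner_conj_commute)

lemma Re_cinner_real_part_op:
  assumes "cadjoint_pair B B'"
  shows "Re (cinner (real_part_op B B' x) x) = Re (cinner (B x) x)"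
  by (simp add: real_part_op_def cinner_add_left cinner_scaleC_left cinner_adjoint_self[OF assms])

lemma Re_cinner_imag_part_op:
  assumes "cadjoint_pair B B'"
  shows "Re (cinner (imag_part_op B B' x) x) = Im (cinner (B x) x)"
  by (simp add: imag_part_op_def cinner_diff_left cinner_scaleC_left cinner_adjoint_self[OF assms]
      complex_diff_cnj field_simps)

lemma Im_cinner_hermitian:
  assumes "cadjoint_pair S S"
  shows "Im (cinner (S x) x) = 0"
  using cinner_adjoint_self[OF assms, of x] by (metis cnj.simps(2) neg_equal_zero)

text \<open>Shifting the real and imaginary parts by real multiples of the identity leaves
  \<open>Re \<langle>H x, i J x\<rangle>\<close> unchanged because all the cross terms are imaginary.\<close>

lemma power2_norm_diff_adjoint:
  assumes "cadjoint_pair B B'"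
  shows "(norm (B x))\<^sup>2 - (norm (B' x))\<^sup>2 =
    4 * Re (cinner (real_part_op B B' x - complex_of_real \<alpha> *\<^sub>C x)
                   (\<i> *\<^sub>C (imag_part_op B B' x - complex_of_real \<beta> *\<^sub>C x)))"
proof -
  have "(norm (B x))\<^sup>2 - (norm (B' x))\<^sup>2 =
      4 * Re (cinner (real_part_op B B' x) (\<i> *\<^sub>C imag_part_op B B' x))"
    unfolding real_part_op_def imag_part_op_def power2_norm_eq_cinner
    by (simp add: cinner_add_left cinner_diff_right cinner_scaleC_left cinner_scaleC_right
        scaleC_scaleC Re_cinner_commute[of "B' x" "B x"] algebra_simps)
  moreover have "Im (cinner (real_part_op B B' x) x) = 0"
    by (rule Im_cinner_hermitian[OF hermitian_real_part_op[OF assms]])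
  moreover have "Im (cinner x (imag_part_op B B' x)) = 0"
    using Im_cinner_hermitian[OF hermitian_imag_part_op[OF assms], of x]
    by (subst cinner_conj_commute) simp
  ultimately show ?thesis
    by (simp add: cinner_diff_left cinner_diff_right cinner_scaleC_left cinner_scaleC_right algebra_simps)
qed

lemma hermitian_quadratic_form_le:
  fixes S :: "'a::complex_inner \<Rightarrow> 'a"
  assumes "cadjoint_pair S S" and bnd: "\<And>u. norm u = 1 \<Longrightarrow> \<bar>Re (cinner (S u) u)\<bar> \<le> r"
  shows "\<bar>Re (cinner (S x) x)\<bar> \<le> r * (norm x)\<^sup>2"
proof (cases "x = 0")
  case True
  thus ?thesis using cadjoint_pair_zero[OF assms(1)] by simp
next
  case False
  then obtain u where u: "norm u = 1" and x: "x = complex_of_real (norm x) *\<^sub>C u"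
    by (rule obtain_unit_vector)
  have "cinner (S x) x = complex_of_real ((norm x)\<^sup>2) * cinner (S u) u"
    by (subst (1 2) x)
       (simp add: cadjoint_pair_scaleC[OF assms(1)] cinner_scaleC_left cinner_scaleC_right power2_eq_square)
  hence "\<bar>Re (cinner (S x) x)\<bar> = (norm x)\<^sup>2 * \<bar>Re (cinner (S u) u)\<bar>" by (simp add: abs_mult)
  also have "\<dots> \<le> (norm x)\<^sup>2 * r" using bnd[OF u] by (simp add: mult_left_mono)
  finally show ?thesis by (simp add: mult.commute)
qed

text \<open>For a selfadjoint operator the norm is at most the numerical radius: polarise the
  quadratic form and evaluate it at \<open>x\<close> and a multiple of \<open>S x\<close> of the same norm.\<close>

lemma hermitian_norm_le:
  fixes S :: "'a::complex_inner \<Rightarrow> 'a"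
  assumes herm: "cadjoint_pair S S" and bnd: "\<And>u. norm u = 1 \<Longrightarrow> \<bar>Re (cinner (S u) u)\<bar> \<le> r"
    and r: "r \<ge> 0"
  shows "norm (S x) \<le> r * norm x"
proof (cases "S x = 0")
  case True thus ?thesis using r by simp
next
  case False
  note form_le = hermitian_quadratic_form_le[OF herm bnd]
  have polar: "4 * Re (cinner (S x) y) \<le> 2 * r * ((norm x)\<^sup>2 + (norm y)\<^sup>2)" for y
  proof -
    have "Re (cinner (S (x + y)) (x + y)) - Re (cinner (S (x - y)) (x - y)) = 4 * Re (cinner (S x) y)"
      using Re_cinner_commute[of x "S y"] Re_cinner_commute[of "S x" y] cadjoint_pairD[OF herm, of y x]
      by (simp add: cadjoint_pair_add[OF herm] cadjoint_pair_diff[OF herm]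
          cinner_add_left cinner_add_right cinner_diff_left cinner_diff_right)
    moreover have "r * (norm (x + y))\<^sup>2 + r * (norm (x - y))\<^sup>2 = 2 * r * ((norm x)\<^sup>2 + (norm y)\<^sup>2)"
      unfolding power2_norm_add power2_norm_diff by (simp add: algebra_simps)
    ultimately show ?thesis
      using form_le[of "x + y"] form_le[of "x - y"] by (simp add: abs_le_iff)
  qed
  have x0: "x \<noteq> 0" using False cadjoint_pair_zero[OF herm] by auto
  define s where "s = norm x / norm (S x)"
  have s: "s > 0" "s * norm (S x) = norm x" unfolding s_def using False x0 by simp_all
  have "4 * (s * (norm (S x))\<^sup>2) \<le> 2 * r * ((norm x)\<^sup>2 + (norm x)\<^sup>2)"
    using polar[of "complex_of_real s *\<^sub>C S x"] s
    by (simp add: cinner_scaleC_right power2_norm_eq_cinner norm_scaleC power_mult_distrib[symmetric])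
  hence "s * norm (S x) * norm (S x) \<le> norm x * (r * norm x)"
    by (simp add: power2_eq_square algebra_simps)
  hence "norm x * norm (S x) \<le> norm x * (r * norm x)"
    unfolding s(2) .
  thus ?thesis using x0 by simp
qed

lemma abs_diff_SUP_INF_midpoint:
  fixes g :: "'a \<Rightarrow> real"
  assumes "x \<in> U" and bnd: "\<And>y. y \<in> U \<Longrightarrow> \<bar>g y\<bar> \<le> K"
  shows "\<bar>g x - ((SUP y\<in>U. g y) + (INF y\<in>U. g y)) / 2\<bar> \<le> ((SUP y\<in>U. g y) - (INF y\<in>U. g y)) / 2"
proof -
  have "bdd_above (g ` U)" by (rule bdd_aboveI2[where M = K]) (use bnd in force)
  hence "g x \<le> (SUP y\<in>U. g y)" using assms(1) by (intro cSUP_upper)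
  moreover have "bdd_below (g ` U)" by (rule bdd_belowI2[where m = "- K"]) (use bnd in force)
  hence "(INF y\<in>U. g y) \<le> g x" using assms(1) by (intro cINF_lower)
  ultimately show ?thesis by (simp add: abs_le_iff field_simps)
qed

lemma commutator_norm_le:
  fixes B B' :: "'a::complex_inner \<Rightarrow> 'a"
  assumes pair: "cadjoint_pair B B'"
    and re: "\<And>u. norm u = 1 \<Longrightarrow> \<bar>Re (cinner (real_part_op B B' u) u) - \<alpha>\<bar> \<le> a"
    and im: "\<And>u. norm u = 1 \<Longrightarrow> \<bar>Re (cinner (imag_part_op B B' u) u) - \<beta>\<bar> \<le> b"
    and "0 \<le> a" "0 \<le> b"
  shows "norm (B' (B x) - B (B' x)) \<le> 4 * a * b * norm x"
proof -
  define H where "H x = real_part_op B B' x - complex_of_real \<alpha> *\<^sub>C x" for x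
  define J where "J x = imag_part_op B B' x - complex_of_real \<beta> *\<^sub>C x" for x
  have unit: "cinner u u = 1" if "norm u = 1" for u :: 'a
    using that by (simp add: cinner_self_eq_power2_norm)
  have norm_H: "norm (H x) \<le> a * norm x" for x
    unfolding H_def
  proof (rule hermitian_norm_le[OF hermitian_diff_scaleC[OF hermitian_real_part_op[OF pair]] _ \<open>0 \<le> a\<close>])
    fix u :: 'a assume "norm u = 1"
    thus "\<bar>Re (cinner (real_part_op B B' u - complex_of_real \<alpha> *\<^sub>C u) u)\<bar> \<le> a"
      using re unit by (simp add: cinner_diff_left cinner_scaleC_left)
  qed
  have norm_J: "norm (J x) \<le> b * norm x" for x
    unfolding J_def
  proof (rule hermitian_norm_le[OF hermitian_diff_scaleC[OF hermitian_imag_part_op[OF pair]] _ \<open>0 \<le> b\<close>])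
    fix u :: 'a assume "norm u = 1"
    thus "\<bar>Re (cinner (imag_part_op B B' u - complex_of_real \<beta> *\<^sub>C u) u)\<bar> \<le> b"
      using im unit by (simp add: cinner_diff_left cinner_scaleC_left)
  qed
  have "\<bar>Re (cinner (B' (B u) - B (B' u)) u)\<bar> \<le> 4 * a * b" if "norm u = 1" for u
  proof -
    have "Re (cinner (B' (B u) - B (B' u)) u) = (norm (B u))\<^sup>2 - (norm (B' u))\<^sup>2"
      using cadjoint_pairD[OF pair, of "B' u" u] cadjoint_pairD[OF cadjoint_pair_sym[OF pair], of "B u" u]
      by (simp add: cinner_diff_left power2_norm_eq_cinner)
    also have "\<dots> = 4 * Re (cinner (H u) (\<i> *\<^sub>C J u))"
      unfolding H_def J_def by (rule power2_norm_diff_adjoint[OF pair])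
    also have "\<bar>\<dots>\<bar> \<le> 4 * (norm (H u) * norm (J u))"
      using abs_Re_le_cmod[of "cinner (H u) (\<i> *\<^sub>C J u)"] cinner_Cauchy_Schwarz[of "H u" "\<i> *\<^sub>C J u"]
      by (simp add: norm_scaleC)
    also have "\<dots> \<le> 4 * a * b"
      using norm_H[of u] norm_J[of u] that \<open>0 \<le> a\<close> by (simp add: mult_mono)
    finally show ?thesis .
  qed
  thus ?thesis
    using hermitian_norm_le[OF cadjoint_pair_commutator[OF pair]] \<open>0 \<le> a\<close> \<open>0 \<le> b\<close> by simp
qed

lemma onorm_commutator_le_widths:
  fixes B B' :: "'a::complex_inner \<Rightarrow> 'a"
  assumes pair: "cadjoint_pair B B'" and K: "\<And>x. norm (B x) \<le> norm x * K"
    and "\<exists>x::'a. x \<noteq> 0"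
  defines "width g \<equiv> (SUP u\<in>{u. norm u = 1}. g u) - (INF u\<in>{u. norm u = 1}. g u)"
  shows "onorm (\<lambda>x. B' (B x) - B (B' x))
    \<le> width (\<lambda>u. Re (cinner (real_part_op B B' u) u)) * width (\<lambda>u. Re (cinner (imag_part_op B B' u) u))"
proof -
  define U where "U = {u::'a. norm u = 1}"
  define h where "h u = Re (cinner (real_part_op B B' u) u)" for u
  define j where "j u = Re (cinner (imag_part_op B B' u) u)" for u
  have "cmod (cinner (B u) u) \<le> K" if "u \<in> U" for u
    using cinner_Cauchy_Schwarz[of "B u" u] K[of u] that by (simp add: U_def)
  hence h_bounded: "\<bar>h u\<bar> \<le> K" and j_bounded: "\<bar>j u\<bar> \<le> K" if "u \<in> U" for u
    using that abs_Re_le_cmod abs_Im_le_cmod order_trans unfolding h_def j_def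
    by (metis Re_cinner_real_part_op[OF pair], metis Re_cinner_imag_part_op[OF pair])
  have h_mid: "\<bar>h u - ((SUP u\<in>U. h u) + (INF u\<in>U. h u)) / 2\<bar> \<le> width h / 2"
    and j_mid: "\<bar>j u - ((SUP u\<in>U. j u) + (INF u\<in>U. j u)) / 2\<bar> \<le> width j / 2" if "u \<in> U" for u
    using abs_diff_SUP_INF_midpoint[OF that h_bounded] abs_diff_SUP_INF_midpoint[OF that j_bounded]
    unfolding width_def U_def[symmetric] by simp_all
  obtain u0 :: 'a where "u0 \<in> U"
    using assms(3) obtain_unit_vector unfolding U_def by blast
  hence "0 \<le> width h / 2" "0 \<le> width j / 2"
    using h_mid j_mid abs_ge_zero order_trans by blast+
  hence "norm (B' (B x) - B (B' x)) \<le> 4 * (width h / 2) * (width j / 2) * norm x" for x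
    using h_mid j_mid unfolding U_def h_def j_def by (intro commutator_norm_le[OF pair]) auto
  thus ?thesis
    using \<open>0 \<le> width h / 2\<close> \<open>0 \<le> width j / 2\<close> unfolding h_def j_def by (intro onorm_bound) simp_all
qed

theorem proposition3:
  fixes A :: "'a::chilbert_space \<Rightarrow> 'a"
  assumes "bounded_clinear_op A"
    and "\<exists>x::'a. x \<noteq> 0"
  shows "\<forall>t\<in>{0..<2*pi}.
           onorm (\<lambda>x. cadjoint A (A x) - A (cadjoint A x)) \<le> b_x A t * b_y A t"
proof (intro ballI)
  fix t :: real
  define e where "e = exp (\<i> * complex_of_real t)"
  define B' where "B' y = cnj e *\<^sub>C cadjoint A y" for y
  have adjoint: "cadjoint_pair A (cadjoint A)" by (rule cadjoint_pair_cadjoint[OF assms(1)])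
  have pair: "cadjoint_pair (rot_op A t) B'"
    unfolding B'_def e_def by (rule cadjoint_pair_rot_op[OF adjoint])
  have "cnj e * e = 1"
    using complex_norm_square[of e] by (simp add: e_def norm_exp_i_times mult.commute)
  hence commutator: "B' (rot_op A t x) - rot_op A t (B' x) = cadjoint A (A x) - A (cadjoint A x)" for x
    using cadjoint_pair_scaleC[OF adjoint] cadjoint_pair_scaleC[OF cadjoint_pair_sym[OF adjoint]]
    by (simp add: B'_def rot_op_def scaleC_scaleC mult.commute[of e] scaleC_one flip: e_def)
  obtain K where "\<And>x. norm (rot_op A t x) \<le> norm x * K"
    using assms(1) by (auto simp: bounded_clinear_op_def rot_op_def norm_scaleC)
  from onorm_commutator_le_widths[OF pair this assms(2)]
  show "onorm (\<lambda>x. cadjoint A (A x) - A (cadjoint A x)) \<le> b_x A t * b_y A t"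
    using cadjoint_eqI[OF pair]
    by (simp add: commutator b_x_def b_y_def H_op_def J_op_def real_part_op_def imag_part_op_def)
qed

end
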